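(* Let $H$ be a finitely generated group on which simple random walk is transient. Then the wreath product $(\mathbb{Z}/2\mathbb{Z})\wr H$ does not have property $H_{\mathrm{FD}}$.
   Context: $(\mathbb{Z}/2\mathbb{Z})\wr H=(\oplus_H\mathbb{Z}/2\mathbb{Z})\rtimes H$ is the restricted wreath product. A finitely generated group $G$ has property $H_{\mathrm{FD}}$ if every unitary representation $\pi$ of $G$ with nonzero first reduced cohomology $\overline{H}^1(G,\pi)$ (1-cocycles modulo the closure, for pointwise convergence, of 1-coboundaries) admits a nonzero finite-dimensional subrepresentation. *)

theory Defs
  imports "HOL-Analysis.Analysis" "HOL-Algebra.Generated_Groups"
begin

definition finitely_generated :: "('a, 'b) monoid_scheme \<Rightarrow> bool" where
  "finitely_generated G \<longleftrightarrow>
     (\<exists>S. finite S \<and> S \<subseteq> carrier G \<and> generate G S = carrier G)"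

definition return_words :: "('a, 'b) monoid_scheme \<Rightarrow> 'a set \<Rightarrow> nat \<Rightarrow> nat" where
  "return_words G S n =
     card {w. length w = n \<and> set w \<subseteq> S \<and> foldr (\<otimes>\<^bsub>G\<^esub>) w \<one>\<^bsub>G\<^esub> = \<one>\<^bsub>G\<^esub>}"

definition return_prob :: "('a, 'b) monoid_scheme \<Rightarrow> 'a set \<Rightarrow> nat \<Rightarrow> real" where
  "return_prob G S n = real (return_words G S n) / real (card S) ^ n"

text \<open>Transience does not
  depend on the choice of finite symmetric generating set.\<close>
definition srw_transient :: "('a, 'b) monoid_scheme \<Rightarrow> bool" where
  "srw_transient G \<longleftrightarrow>
     (\<exists>S. finite S \<and> S \<noteq> {} \<and> S \<subseteq> carrier G \<and> (\<forall>s\<in>S. inv\<^bsub>G\<^esub> s \<in> S) \<and>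
          generate G S = carrier G \<and> summable (return_prob G S))"

text \<open>Elements: pairs (f, h) with f : carrier H \<rightarrow> Z/2Z (as bool, xor as addition)
  finitely supported, and h \<in> carrier H.  Multiplication:
  (f,h)(f',h') = (f + h.f', h h') where (h.f')(x) = f'(h^{-1} x).\<close>
definition lamplighter :: "('a, 'b) monoid_scheme \<Rightarrow> (('a \<Rightarrow> bool) \<times> 'a) monoid" where
  "lamplighter H =
    \<lparr> carrier = {(f, h). finite {x. f x} \<and> {x. f x} \<subseteq> carrier H \<and> h \<in> carrier H},
      mult = (\<lambda>(f, h) (f', h').
                 ((\<lambda>x. if x \<in> carrier H then f x \<noteq> f' (inv\<^bsub>H\<^esub> h \<otimes>\<^bsub>H\<^esub> x) else False),
                  h \<otimes>\<^bsub>H\<^esub> h')),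
      one = ((\<lambda>_. False), \<one>\<^bsub>H\<^esub>) \<rparr>"

definition l2 :: "nat set \<Rightarrow> (nat \<Rightarrow> complex) set" where
  "l2 I = {f. (\<forall>i. i \<notin> I \<longrightarrow> f i = 0) \<and> (\<lambda>i. (cmod (f i))\<^sup>2) summable_on I}"

definition l2norm :: "nat set \<Rightarrow> (nat \<Rightarrow> complex) \<Rightarrow> real" where
  "l2norm I f = sqrt (infsum (\<lambda>i. (cmod (f i))\<^sup>2) I)"

definition unitary_rep ::
  "('g, 'b) monoid_scheme \<Rightarrow> nat set \<Rightarrow> ('g \<Rightarrow> (nat \<Rightarrow> complex) \<Rightarrow> (nat \<Rightarrow> complex)) \<Rightarrow> bool" where
  "unitary_rep G I \<pi> \<longleftrightarrow>
     (\<forall>g\<in>carrier G.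
        \<pi> g ` l2 I = l2 I \<and>
        (\<forall>u\<in>l2 I. \<forall>v\<in>l2 I. \<forall>a b::complex.
            \<pi> g (\<lambda>i. a * u i + b * v i) = (\<lambda>i. a * \<pi> g u i + b * \<pi> g v i)) \<and>
        (\<forall>u\<in>l2 I. l2norm I (\<pi> g u) = l2norm I u)) \<and>
     (\<forall>u\<in>l2 I. \<pi> \<one>\<^bsub>G\<^esub> u = u) \<and>
     (\<forall>g\<in>carrier G. \<forall>h\<in>carrier G. \<forall>u\<in>l2 I. \<pi> (g \<otimes>\<^bsub>G\<^esub> h) u = \<pi> g (\<pi> h u))"

definition cocycle ::
  "('g, 'b) monoid_scheme \<Rightarrow> nat set \<Rightarrow> ('g \<Rightarrow> (nat \<Rightarrow> complex) \<Rightarrow> (nat \<Rightarrow> complex))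
     \<Rightarrow> ('g \<Rightarrow> nat \<Rightarrow> complex) \<Rightarrow> bool" where
  "cocycle G I \<pi> b \<longleftrightarrow>
     (\<forall>g\<in>carrier G. b g \<in> l2 I) \<and>
     (\<forall>g\<in>carrier G. \<forall>h\<in>carrier G. b (g \<otimes>\<^bsub>G\<^esub> h) = (\<lambda>i. b g i + \<pi> g (b h) i))"

text \<open>b lies in the closure of the coboundaries g \<mapsto> \<pi>(g)v - v for the topology of
  pointwise convergence on G (basic neighbourhoods: finitely many g, radius \<epsilon>).\<close>
definition in_closure_coboundaries ::
  "('g, 'b) monoid_scheme \<Rightarrow> nat set \<Rightarrow> ('g \<Rightarrow> (nat \<Rightarrow> complex) \<Rightarrow> (nat \<Rightarrow> complex))
     \<Rightarrow> ('g \<Rightarrow> nat \<Rightarrow> complex) \<Rightarrow> bool" where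
  "in_closure_coboundaries G I \<pi> b \<longleftrightarrow>
     (\<forall>F. finite F \<and> F \<subseteq> carrier G \<longrightarrow> (\<forall>\<epsilon>>0. \<exists>v\<in>l2 I. \<forall>g\<in>F.
        l2norm I (\<lambda>i. b g i - (\<pi> g v i - v i)) < \<epsilon>))"

definition nonzero_reduced_H1 ::
  "('g, 'b) monoid_scheme \<Rightarrow> nat set \<Rightarrow> ('g \<Rightarrow> (nat \<Rightarrow> complex) \<Rightarrow> (nat \<Rightarrow> complex)) \<Rightarrow> bool" where
  "nonzero_reduced_H1 G I \<pi> \<longleftrightarrow> (\<exists>b. cocycle G I \<pi> b \<and> \<not> in_closure_coboundaries G I \<pi> b)"

text \<open>A nonzero finite-dimensional subrepresentation: a nonzero finite-dimensional
  complex linear subspace of l2 I invariant under all \<pi>(g) (finite-dimensional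
  subspaces are automatically closed).\<close>
definition has_nonzero_fd_subrep ::
  "('g, 'b) monoid_scheme \<Rightarrow> nat set \<Rightarrow> ('g \<Rightarrow> (nat \<Rightarrow> complex) \<Rightarrow> (nat \<Rightarrow> complex)) \<Rightarrow> bool" where
  "has_nonzero_fd_subrep G I \<pi> \<longleftrightarrow>
     (\<exists>V. V \<subseteq> l2 I \<and> (\<lambda>_. 0) \<in> V \<and>
          (\<forall>u\<in>V. \<forall>v\<in>V. \<forall>a b::complex. (\<lambda>i. a * u i + b * v i) \<in> V) \<and>
          (\<exists>B. finite B \<and> B \<subseteq> V \<and>
               (\<forall>u\<in>V. \<exists>c. u = (\<lambda>i. \<Sum>w\<in>B. c w * w i))) \<and>
          (\<exists>u\<in>V. u \<noteq> (\<lambda>_. 0)) \<and>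
          (\<forall>g\<in>carrier G. \<forall>u\<in>V. \<pi> g u \<in> V))"

text \<open>Property H_FD (tested on separable Hilbert spaces l2 I, I \<subseteq> nat; for countable
  groups this is equivalent to testing all unitary representations).\<close>
definition has_HFD :: "('g, 'b) monoid_scheme \<Rightarrow> bool" where
  "has_HFD G \<longleftrightarrow>
     (\<forall>I \<pi>. unitary_rep G I \<pi> \<and> nonzero_reduced_H1 G I \<pi> \<longrightarrow> has_nonzero_fd_subrep G I \<pi>)"

end

theory Submission
  imports Defs "HOL-Library.Function_Algebras"
begin

(* Let the lamplighter group act on l^2(H) by (f, h) u (x) = (-1)^f(x) u(h^-1 x). The formal
   coboundary g |-> pi(g) 1 - 1 of the constant function 1 is a genuine 1-cocycle, namely
   (f, h) |-> -2 times the indicator of the lit lamps. If it were a pointwise limit of coboundaries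
   pi(g) v - v, then Re v would be almost invariant under the generators of H while its value at the
   identity stays close to 1. For a transient walk this contradicts the capacity inequality
   |w(1)|^2 <= G(1) / (2 |S|) * Sum_s ||w(s^-1 .) - w||^2, with G(1) the expected number of returns;
   it is proved by testing w against the truncated Green functions. On the other hand, switching a
   single lamp shows that every nonzero invariant subspace contains a delta function, hence by
   translation all of them, so it is infinite-dimensional since a transient group is infinite. *)

lemma infsum_diff:
  fixes f g :: "'c \<Rightarrow> real"
  assumes "f summable_on A" "g summable_on A"
  shows "infsum (\<lambda>x. f x - g x) A = infsum f A - infsum g A"
proof -
  have "(\<lambda>x. - g x) summable_on A" using assms(2) by (simp add: summable_on_uminus)
  from infsum_add[OF assms(1) this] show ?thesis by (simp add: infsum_uminus)
qed

lemma summable_on_diff: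
  fixes f g :: "'c \<Rightarrow> real"
  assumes "f summable_on A" "g summable_on A"
  shows "(\<lambda>x. f x - g x) summable_on A"
proof -
  have "(\<lambda>x. - g x) summable_on A" using assms(2) by (simp add: summable_on_uminus)
  from summable_on_add[OF assms(1) this] show ?thesis by simp
qed

lemma infsum_sum_finite:
  fixes f :: "'i \<Rightarrow> 'c \<Rightarrow> real"
  assumes "finite A" "\<And>i. i \<in> A \<Longrightarrow> f i summable_on X"
  shows "infsum (\<lambda>x. \<Sum>i\<in>A. f i x) X = (\<Sum>i\<in>A. infsum (f i) X)"
    and "(\<lambda>x. \<Sum>i\<in>A. f i x) summable_on X"
  using assms
  by (induction A rule: finite_induct) (auto simp: infsum_add summable_on_add)

lemma abs_sum_le_sqrt_mult:
  fixes E A B :: "'i \<Rightarrow> real"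
  assumes "\<And>i. i \<in> S \<Longrightarrow> \<bar>E i\<bar> \<le> sqrt (A i) * sqrt (B i)"
    and "\<And>i. A i \<ge> 0" and "\<And>i. B i \<ge> 0"
  shows "\<bar>sum E S\<bar> \<le> sqrt (sum A S) * sqrt (sum B S)"
proof -
  have "\<bar>sum E S\<bar> \<le> (\<Sum>i\<in>S. \<bar>sqrt (A i)\<bar> * \<bar>sqrt (B i)\<bar>)"
    using assms by (intro order_trans[OF sum_abs sum_mono]) auto
  also have "\<dots> \<le> L2_set (\<lambda>i. sqrt (A i)) S * L2_set (\<lambda>i. sqrt (B i)) S"
    by (rule L2_set_mult_ineq)
  also have "\<dots> = sqrt (sum A S) * sqrt (sum B S)"
    using assms(2,3) by (simp add: L2_set_def)
  finally show ?thesis .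
qed

section \<open>Simple random walk and the capacity inequality\<close>

context group
begin

lemma infsum_translate: "s \<in> carrier G \<Longrightarrow> infsum (\<lambda>x. f (s \<otimes> x)) (carrier G) = infsum f (carrier G)"
  and summable_on_translate:
    "s \<in> carrier G \<Longrightarrow> (\<lambda>x. f (s \<otimes> x)) summable_on (carrier G) \<longleftrightarrow> f summable_on (carrier G)"
proof -
  assume s: "s \<in> carrier G"
  have "bij_betw (\<lambda>x. s \<otimes> x) (carrier G) (carrier G)"
    by (rule bij_betw_byWitness[where f'="\<lambda>x. inv s \<otimes> x"]) (use s in \<open>auto simp: m_assoc[symmetric]\<close>)
  thus "infsum (\<lambda>x. f (s \<otimes> x)) (carrier G) = infsum f (carrier G)"
    and "(\<lambda>x. f (s \<otimes> x)) summable_on (carrier G) \<longleftrightarrow> f summable_on (carrier G)"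
    by (rule infsum_reindex_bij_betw, rule summable_on_reindex_bij_betw)
qed

end

locale symmetric_random_walk = group H for H :: "('a, 'b) monoid_scheme" (structure) +
  fixes S :: "'a set"
  assumes finite_S: "finite S" and S_nonempty: "S \<noteq> {}" and S_subset: "S \<subseteq> carrier H"
    and inv_in_S: "\<And>s. s \<in> S \<Longrightarrow> inv s \<in> S"
begin

definition word_count :: "nat \<Rightarrow> 'a \<Rightarrow> nat" where
  "word_count n x = card {w. length w = n \<and> set w \<subseteq> S \<and> foldr (\<otimes>) w \<one> = x}"

definition deg :: real where "deg = real (card S)"

definition walk_prob :: "nat \<Rightarrow> 'a \<Rightarrow> real" where
  "walk_prob n x = real (word_count n x) / deg ^ n"

definition markov_op :: "('a \<Rightarrow> real) \<Rightarrow> 'a \<Rightarrow> real" where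
  "markov_op f x = (\<Sum>s\<in>S. f (inv s \<otimes> x)) / deg"

lemma deg_pos: "deg > 0"
  using finite_S S_nonempty by (simp add: deg_def card_gt_0_iff)

lemma foldr_in_carrier: "set w \<subseteq> S \<Longrightarrow> foldr (\<otimes>) w \<one> \<in> carrier H"
  by (induction w) (use S_subset in auto)

lemma finite_words: "finite {w. length w = n \<and> set w \<subseteq> S}"
  using finite_lists_length_eq[OF finite_S, of n] by (simp add: conj_commute)

lemma finite_words_to: "finite {w. length w = n \<and> set w \<subseteq> S \<and> foldr (\<otimes>) w \<one> = x}"
  by (rule finite_subset[OF _ finite_words[of n]]) auto

lemma word_count_0: "word_count 0 x = (if x = \<one> then 1 else 0)"
proof -
  have "{w. length w = 0 \<and> set w \<subseteq> S \<and> foldr (\<otimes>) w \<one> = x} = (if x = \<one> then {[]} else {})"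
    by auto
  thus ?thesis unfolding word_count_def by simp
qed

lemma word_count_Suc:
  assumes x: "x \<in> carrier H"
  shows "word_count (Suc n) x = (\<Sum>s\<in>S. word_count n (inv s \<otimes> x))"
proof -
  let ?W = "\<lambda>s. {w. length w = n \<and> set w \<subseteq> S \<and> foldr (\<otimes>) w \<one> = inv s \<otimes> x}"
  have first_letter: "(s \<otimes> foldr (\<otimes>) w \<one> = x) = (foldr (\<otimes>) w \<one> = inv s \<otimes> x)"
    if "s \<in> S" "set w \<subseteq> S" for s w
    using that foldr_in_carrier S_subset x by (metis inv_solve_left subsetD)
  have "w \<in> {w. length w = Suc n \<and> set w \<subseteq> S \<and> foldr (\<otimes>) w \<one> = x}
      \<longleftrightarrow> w \<in> (\<Union>s\<in>S. (Cons s) ` ?W s)" for w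
  proof (cases w)
    case (Cons s w')
    show ?thesis unfolding Cons using first_letter[of s w'] by auto
  qed auto
  hence "{w. length w = Suc n \<and> set w \<subseteq> S \<and> foldr (\<otimes>) w \<one> = x} = (\<Union>s\<in>S. (Cons s) ` ?W s)"
    by blast
  hence "word_count (Suc n) x = card (\<Union>s\<in>S. (Cons s) ` ?W s)"
    unfolding word_count_def by simp
  also have "\<dots> = (\<Sum>s\<in>S. card ((Cons s) ` ?W s))"
    using finite_S finite_words_to by (intro card_UN_disjoint) auto
  also have "\<dots> = (\<Sum>s\<in>S. word_count n (inv s \<otimes> x))"
    unfolding word_count_def by (intro sum.cong refl card_image) auto
  finally show ?thesis .
qed

lemma walk_prob_0: "walk_prob 0 x = (if x = \<one> then 1 else 0)"
  by (simp add: walk_prob_def word_count_0)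

lemma walk_prob_Suc: "x \<in> carrier H \<Longrightarrow> walk_prob (Suc n) x = markov_op (walk_prob n) x"
  unfolding walk_prob_def markov_op_def word_count_Suc
  by (simp add: sum_divide_distrib[symmetric] field_simps)

lemma walk_prob_nonneg: "walk_prob n x \<ge> 0"
  using deg_pos by (simp add: walk_prob_def)

lemma walk_prob_one: "walk_prob n \<one> = return_prob H S n"
  by (simp add: walk_prob_def return_prob_def return_words_def word_count_def deg_def)

lemma finite_support_walk_prob: "finite {x. walk_prob n x \<noteq> 0}"
proof (rule finite_subset[OF _ finite_imageI[OF finite_words]])
  show "{x. walk_prob n x \<noteq> 0} \<subseteq> (\<lambda>w. foldr (\<otimes>) w \<one>) ` {w. length w = n \<and> set w \<subseteq> S}"
  proof
    fix x assume "x \<in> {x. walk_prob n x \<noteq> 0}"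
    hence "word_count n x \<noteq> 0" by (simp add: walk_prob_def)
    hence "{w. length w = n \<and> set w \<subseteq> S \<and> foldr (\<otimes>) w \<one> = x} \<noteq> {}"
      unfolding word_count_def by (metis card.empty)
    thus "x \<in> (\<lambda>w. foldr (\<otimes>) w \<one>) ` {w. length w = n \<and> set w \<subseteq> S}" by blast
  qed
qed

definition fin_supp :: "('a \<Rightarrow> real) \<Rightarrow> bool" where
  "fin_supp f \<longleftrightarrow> finite {x\<in>carrier H. f x \<noteq> 0}"

definition dot :: "('a \<Rightarrow> real) \<Rightarrow> ('a \<Rightarrow> real) \<Rightarrow> real" where
  "dot a b = infsum (\<lambda>x. a x * b x) (carrier H)"

definition grad :: "'a \<Rightarrow> ('a \<Rightarrow> real) \<Rightarrow> 'a \<Rightarrow> real" where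
  "grad s f x = f (inv s \<otimes> x) - f x"

lemma summable_on_fin_supp: "fin_supp f \<Longrightarrow> f summable_on carrier H"
  unfolding fin_supp_def
  by (subst summable_on_cong_neutral[where T="{x\<in>carrier H. f x \<noteq> 0}" and g=f]) auto

lemma infsum_eq_sum_support:
  assumes "finite T" "T \<subseteq> carrier H" "\<And>x. x \<in> carrier H \<Longrightarrow> x \<notin> T \<Longrightarrow> f x = 0"
  shows "infsum f (carrier H) = sum f T"
  using assms by (subst infsum_cong_neutral[where T=T and g=f]) auto

lemma fin_supp_mono: "fin_supp g \<Longrightarrow> (\<And>x. x \<in> carrier H \<Longrightarrow> g x = 0 \<Longrightarrow> f x = 0) \<Longrightarrow> fin_supp f"
  unfolding fin_supp_def by (erule finite_subset[rotated]) auto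

lemma fin_supp_mult_left: "fin_supp g \<Longrightarrow> fin_supp (\<lambda>x. f x * g x)"
  by (erule fin_supp_mono) auto

lemma fin_supp_mult_right: "fin_supp g \<Longrightarrow> fin_supp (\<lambda>x. g x * f x)"
  by (erule fin_supp_mono) auto

lemma fin_supp_add: "fin_supp f \<Longrightarrow> fin_supp g \<Longrightarrow> fin_supp (\<lambda>x. f x + g x)"
  unfolding fin_supp_def
  by (rule finite_subset[of _ "{x\<in>carrier H. f x \<noteq> 0} \<union> {x\<in>carrier H. g x \<noteq> 0}"]) auto

lemma fin_supp_diff: "fin_supp f \<Longrightarrow> fin_supp g \<Longrightarrow> fin_supp (\<lambda>x. f x - g x)"
  unfolding fin_supp_def
  by (rule finite_subset[of _ "{x\<in>carrier H. f x \<noteq> 0} \<union> {x\<in>carrier H. g x \<noteq> 0}"]) auto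

lemma fin_supp_sum: "finite A \<Longrightarrow> (\<And>i. i \<in> A \<Longrightarrow> fin_supp (f i)) \<Longrightarrow> fin_supp (\<lambda>x. \<Sum>i\<in>A. f i x)"
proof (induction A rule: finite_induct)
  case empty thus ?case by (simp add: fin_supp_def)
next
  case (insert a A) thus ?case by (simp add: fin_supp_add)
qed

lemma fin_supp_translate:
  assumes s: "s \<in> carrier H" and g: "fin_supp g"
  shows "fin_supp (\<lambda>x. g (s \<otimes> x))"
  unfolding fin_supp_def
proof (rule finite_subset[OF _ finite_imageI[OF g[unfolded fin_supp_def], of "\<lambda>y. inv s \<otimes> y"]])
  show "{x \<in> carrier H. g (s \<otimes> x) \<noteq> 0} \<subseteq> (\<lambda>y. inv s \<otimes> y) ` {x \<in> carrier H. g x \<noteq> 0}"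
  proof
    fix x assume x: "x \<in> {x \<in> carrier H. g (s \<otimes> x) \<noteq> 0}"
    hence "x = inv s \<otimes> (s \<otimes> x)" using s by (simp add: m_assoc[symmetric])
    thus "x \<in> (\<lambda>y. inv s \<otimes> y) ` {x \<in> carrier H. g x \<noteq> 0}" using x s by auto
  qed
qed

lemma fin_supp_grad: "s \<in> S \<Longrightarrow> fin_supp g \<Longrightarrow> fin_supp (grad s g)"
  unfolding grad_def using S_subset by (intro fin_supp_diff fin_supp_translate) auto

lemma fin_supp_markov_op: "fin_supp g \<Longrightarrow> fin_supp (markov_op g)"
  unfolding markov_op_def using S_subset
  by (intro fin_supp_mult_right[where f="\<lambda>_. 1 / deg", simplified] fin_supp_sum finite_S fin_supp_translate) auto

lemma fin_supp_walk_prob: "fin_supp (walk_prob n)"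
  unfolding fin_supp_def by (rule finite_subset[OF _ finite_support_walk_prob[of n]]) auto

lemma sum_S_reindex_inv: "(\<Sum>s\<in>S. F (inv s)) = (\<Sum>s\<in>S. F s)"
  by (rule sum.reindex_bij_betw, rule bij_betw_byWitness[where f'="\<lambda>s. inv s"])
     (use inv_in_S S_subset in auto)

lemma sum_dot_translate_swap:
  assumes b: "fin_supp b"
  shows "(\<Sum>s\<in>S. dot (\<lambda>x. a (inv s \<otimes> x)) b) = (\<Sum>s\<in>S. dot a (\<lambda>x. b (inv s \<otimes> x)))"
proof -
  have "dot (\<lambda>x. a (inv s \<otimes> x)) b = dot a (\<lambda>y. b (s \<otimes> y))" if s: "s \<in> S" for s
  proof -
    have sc: "s \<in> carrier H" using s S_subset by auto
    have "dot (\<lambda>x. a (inv s \<otimes> x)) b = infsum (\<lambda>y. a (inv s \<otimes> (s \<otimes> y)) * b (s \<otimes> y)) (carrier H)"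
      unfolding dot_def using infsum_translate[OF sc, of "\<lambda>x. a (inv s \<otimes> x) * b x"] by simp
    also have "\<dots> = dot a (\<lambda>y. b (s \<otimes> y))"
      unfolding dot_def by (rule infsum_cong) (use sc in \<open>simp add: m_assoc[symmetric]\<close>)
    finally show ?thesis .
  qed
  hence "(\<Sum>s\<in>S. dot (\<lambda>x. a (inv s \<otimes> x)) b) = (\<Sum>s\<in>S. dot a (\<lambda>y. b (s \<otimes> y)))"
    by simp
  also have "\<dots> = (\<Sum>s\<in>S. dot a (\<lambda>y. b (inv s \<otimes> y)))"
    by (rule sum_S_reindex_inv[symmetric])
  finally show ?thesis .
qed

lemma dot_markov_op_right:
  assumes b: "fin_supp b"
  shows "dot a (markov_op b) = (\<Sum>s\<in>S. dot a (\<lambda>x. b (inv s \<otimes> x))) / deg"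
proof -
  have summ: "(\<lambda>x. a x * b (inv s \<otimes> x)) summable_on carrier H" if "s \<in> S" for s
    using that S_subset by (intro summable_on_fin_supp fin_supp_mult_left fin_supp_translate b) auto
  have "dot a (markov_op b) = infsum (\<lambda>x. (\<Sum>s\<in>S. a x * b (inv s \<otimes> x)) * (1 / deg)) (carrier H)"
    unfolding dot_def markov_op_def by (simp add: sum_distrib_left)
  also have "\<dots> = infsum (\<lambda>x. \<Sum>s\<in>S. a x * b (inv s \<otimes> x)) (carrier H) * (1 / deg)"
    by (rule infsum_cmult_left) (use infsum_sum_finite(2)[OF finite_S summ] in simp)
  also have "\<dots> = (\<Sum>s\<in>S. dot a (\<lambda>x. b (inv s \<otimes> x))) / deg"
    unfolding dot_def using infsum_sum_finite(1)[OF finite_S summ] by simp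
  finally show ?thesis .
qed

lemma dot_markov_op_left:
  assumes b: "fin_supp b"
  shows "dot (markov_op a) b = (\<Sum>s\<in>S. dot (\<lambda>x. a (inv s \<otimes> x)) b) / deg"
proof -
  have summ: "(\<lambda>x. a (inv s \<otimes> x) * b x) summable_on carrier H" for s
    by (intro summable_on_fin_supp fin_supp_mult_left b)
  have "dot (markov_op a) b = infsum (\<lambda>x. (\<Sum>s\<in>S. a (inv s \<otimes> x) * b x) * (1 / deg)) (carrier H)"
    unfolding dot_def markov_op_def by (simp add: sum_distrib_right)
  also have "\<dots> = infsum (\<lambda>x. \<Sum>s\<in>S. a (inv s \<otimes> x) * b x) (carrier H) * (1 / deg)"
    by (rule infsum_cmult_left) (use infsum_sum_finite(2)[OF finite_S summ] in simp)
  also have "\<dots> = (\<Sum>s\<in>S. dot (\<lambda>x. a (inv s \<otimes> x)) b) / deg"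
    unfolding dot_def using infsum_sum_finite(1)[OF finite_S summ] by simp
  finally show ?thesis .
qed

lemma markov_op_self_adjoint: "fin_supp b \<Longrightarrow> dot (markov_op a) b = dot a (markov_op b)"
  by (simp add: dot_markov_op_left dot_markov_op_right sum_dot_translate_swap)

lemma dot_walk_prob_0: "dot f (walk_prob 0) = f \<one>"
  unfolding dot_def by (subst infsum_eq_sum_support[of "{\<one>}"]) (auto simp: walk_prob_0)

lemma dot_walk_prob: "dot (walk_prob m) (walk_prob n) = walk_prob (m + n) \<one>"
proof (induction m arbitrary: n)
  case 0
  show ?case using dot_walk_prob_0[of "walk_prob n"] by (simp add: dot_def mult.commute)
next
  case (Suc m)
  have "dot (walk_prob (Suc m)) (walk_prob n) = dot (markov_op (walk_prob m)) (walk_prob n)"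
    unfolding dot_def by (rule infsum_cong) (simp add: walk_prob_Suc)
  also have "\<dots> = dot (walk_prob m) (markov_op (walk_prob n))"
    by (rule markov_op_self_adjoint[OF fin_supp_walk_prob])
  also have "\<dots> = dot (walk_prob m) (walk_prob (Suc n))"
    unfolding dot_def by (rule infsum_cong) (simp add: walk_prob_Suc)
  also have "\<dots> = walk_prob (Suc m + n) \<one>" using Suc[of "Suc n"] by simp
  finally show ?case .
qed

lemma dot_grad_grad:
  assumes s: "s \<in> carrier H" and g: "fin_supp g"
  shows "dot (grad s v) (grad s g)
    = 2 * dot v g - dot (\<lambda>x. v (inv s \<otimes> x)) g - dot v (\<lambda>x. g (inv s \<otimes> x))"
proof -
  have s': "inv s \<in> carrier H" using s by simp
  have summ: "(\<lambda>x. v (inv s \<otimes> x) * g (inv s \<otimes> x)) summable_on carrier H"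
    "(\<lambda>x. v (inv s \<otimes> x) * g x) summable_on carrier H"
    "(\<lambda>x. v x * g (inv s \<otimes> x)) summable_on carrier H"
    "(\<lambda>x. v x * g x) summable_on carrier H"
    by (intro summable_on_fin_supp fin_supp_mult_left fin_supp_translate s' g)+
  have "dot (grad s v) (grad s g)
      = infsum (\<lambda>x. ((v (inv s \<otimes> x) * g (inv s \<otimes> x) - v (inv s \<otimes> x) * g x)
                      - v x * g (inv s \<otimes> x)) + v x * g x) (carrier H)"
    unfolding dot_def grad_def by (rule infsum_cong) (simp add: algebra_simps)
  also have "\<dots> = ((infsum (\<lambda>x. v (inv s \<otimes> x) * g (inv s \<otimes> x)) (carrier H)
                    - dot (\<lambda>x. v (inv s \<otimes> x)) g) - dot v (\<lambda>x. g (inv s \<otimes> x))) + dot v g"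
    unfolding dot_def using summ by (simp add: infsum_add infsum_diff summable_on_diff summable_on_add)
  also have "infsum (\<lambda>x. v (inv s \<otimes> x) * g (inv s \<otimes> x)) (carrier H) = dot v g"
    unfolding dot_def using infsum_translate[OF s', of "\<lambda>x. v x * g x"] by simp
  finally show ?thesis by simp
qed

lemma sum_dot_grad:
  assumes g: "fin_supp g"
  shows "(\<Sum>s\<in>S. dot (grad s v) (grad s g)) = 2 * deg * dot v (\<lambda>x. g x - markov_op g x)"
proof -
  have "(\<Sum>s\<in>S. dot (grad s v) (grad s g))
      = deg * (2 * dot v g) - (\<Sum>s\<in>S. dot (\<lambda>x. v (inv s \<otimes> x)) g) - (\<Sum>s\<in>S. dot v (\<lambda>x. g (inv s \<otimes> x)))"
    using S_subset by (simp add: dot_grad_grad[OF _ g] subset_iff sum_subtractf deg_def)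
  also have "\<dots> = 2 * deg * (dot v g - dot v (markov_op g))"
    using deg_pos by (simp add: sum_dot_translate_swap[OF g] dot_markov_op_right[OF g] algebra_simps)
  also have "dot v g - dot v (markov_op g) = dot v (\<lambda>x. g x - markov_op g x)"
    unfolding dot_def
    by (subst infsum_diff[symmetric]) (auto intro!: summable_on_fin_supp fin_supp_mult_left g fin_supp_markov_op
        simp: right_diff_distrib)
  finally show ?thesis .
qed

lemma abs_dot_le:
  assumes b: "fin_supp b" and a: "(\<lambda>x. (a x)\<^sup>2) summable_on carrier H"
  shows "\<bar>dot a b\<bar> \<le> sqrt (dot a a) * sqrt (dot b b)"
proof -
  define T where "T = {x\<in>carrier H. b x \<noteq> 0}"
  have T: "finite T" "T \<subseteq> carrier H" using b by (auto simp: T_def fin_supp_def)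
  have ab: "dot a b = (\<Sum>x\<in>T. a x * b x)" and bb: "dot b b = (\<Sum>x\<in>T. (b x)\<^sup>2)"
    unfolding dot_def power2_eq_square by (rule infsum_eq_sum_support; use T in \<open>auto simp: T_def\<close>)+
  have "(\<Sum>x\<in>T. (a x)\<^sup>2) = infsum (\<lambda>x. (a x)\<^sup>2) T" using T by simp
  also have "\<dots> \<le> dot a a"
    unfolding dot_def power2_eq_square[symmetric] by (rule infsum_mono_neutral) (use T a in auto)
  finally have aa: "(\<Sum>x\<in>T. (a x)\<^sup>2) \<le> dot a a" .
  have "\<bar>\<Sum>x\<in>T. a x * b x\<bar> \<le> (\<Sum>x\<in>T. \<bar>a x\<bar> * \<bar>b x\<bar>)"
    by (metis (no_types, lifting) abs_mult sum.cong sum_abs)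
  also have "\<dots> \<le> L2_set a T * L2_set b T" by (rule L2_set_mult_ineq)
  also have "\<dots> \<le> sqrt (dot a a) * sqrt (dot b b)"
    unfolding L2_set_def bb by (intro mult_right_mono real_sqrt_le_mono aa) (auto intro: sum_nonneg)
  finally show ?thesis unfolding ab .
qed

lemma dot_self_nonneg: "dot a a \<ge> 0"
  unfolding dot_def by (rule infsum_nonneg) simp

definition green_trunc :: "nat \<Rightarrow> 'a \<Rightarrow> real" where
  "green_trunc N x = (\<Sum>n<N. walk_prob n x)"

lemma fin_supp_green_trunc: "fin_supp (green_trunc N)"
  unfolding green_trunc_def by (intro fin_supp_sum fin_supp_walk_prob) auto

lemma green_trunc_laplacian:
  assumes x: "x \<in> carrier H"
  shows "green_trunc N x - markov_op (green_trunc N) x = walk_prob 0 x - walk_prob N x"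
proof -
  have "markov_op (green_trunc N) x = (\<Sum>n<N. markov_op (walk_prob n) x)"
    by (simp add: markov_op_def green_trunc_def sum.swap[of _ S] sum_divide_distrib)
  also have "\<dots> = (\<Sum>n<N. walk_prob (Suc n) x)" using x by (simp add: walk_prob_Suc)
  finally have "green_trunc N x - markov_op (green_trunc N) x = (\<Sum>n<N. walk_prob n x - walk_prob (Suc n) x)"
    by (simp add: green_trunc_def sum_subtractf)
  also have "\<dots> = walk_prob 0 x - walk_prob N x" by (rule sum_lessThan_telescope')
  finally show ?thesis .
qed

lemma sum_dot_grad_green_trunc:
  "(\<Sum>s\<in>S. dot (grad s v) (grad s (green_trunc N))) = 2 * deg * (v \<one> - dot v (walk_prob N))"
proof -
  have "dot v (\<lambda>x. green_trunc N x - markov_op (green_trunc N) x)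
      = infsum (\<lambda>x. v x * walk_prob 0 x - v x * walk_prob N x) (carrier H)"
    unfolding dot_def by (rule infsum_cong) (simp add: green_trunc_laplacian algebra_simps)
  also have "\<dots> = v \<one> - dot v (walk_prob N)"
    by (subst infsum_diff) (auto intro!: summable_on_fin_supp fin_supp_mult_left fin_supp_walk_prob
        simp: dot_walk_prob_0[unfolded dot_def] dot_def)
  finally show ?thesis by (simp add: sum_dot_grad[OF fin_supp_green_trunc])
qed

lemma dirichlet_green_trunc_le:
  assumes transient: "summable (\<lambda>n. walk_prob n \<one>)"
  shows "(\<Sum>s\<in>S. dot (grad s (green_trunc N)) (grad s (green_trunc N))) \<le> 2 * deg * (\<Sum>n. walk_prob n \<one>)"
proof -
  have "dot (green_trunc N) (walk_prob N) \<ge> 0"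
    unfolding dot_def green_trunc_def by (intro infsum_nonneg mult_nonneg_nonneg sum_nonneg walk_prob_nonneg)
  moreover have "green_trunc N \<one> \<le> (\<Sum>n. walk_prob n \<one>)"
    unfolding green_trunc_def by (rule sum_le_suminf[OF transient]) (auto simp: walk_prob_nonneg)
  ultimately show ?thesis
    unfolding sum_dot_grad_green_trunc using deg_pos by (simp add: mult_left_mono)
qed

text \<open>Testing w against the truncated Green function g_N: their Dirichlet pairing is
  w(1) - <w, p_N>, and the energy of g_N is bounded by the Green function at the identity.\<close>
lemma capacity_ineq_trunc:
  assumes transient: "summable (\<lambda>n. walk_prob n \<one>)"
    and w: "(\<lambda>x. (w x)\<^sup>2) summable_on carrier H"
    and grad_w: "\<And>s. s \<in> S \<Longrightarrow> (\<lambda>x. (grad s w x)\<^sup>2) summable_on carrier H"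
  shows "\<bar>w \<one>\<bar> \<le> sqrt (\<Sum>s\<in>S. dot (grad s w) (grad s w)) * sqrt ((\<Sum>n. walk_prob n \<one>) / (2 * deg))
      + sqrt (dot w w) * sqrt (walk_prob (2 * N) \<one>)"
proof -
  define C where "C = (\<Sum>n. walk_prob n \<one>)"
  define r where "r = dot w (walk_prob N)"
  have C: "C \<ge> 0" unfolding C_def by (rule suminf_nonneg[OF transient]) (simp add: walk_prob_nonneg)
  have sqrt_C: "sqrt (2 * deg * C) = 2 * deg * sqrt (C / (2 * deg))"
  proof -
    have "sqrt (2 * deg * C) = sqrt ((2 * deg)\<^sup>2 * (C / (2 * deg)))"
      using deg_pos by (simp add: power2_eq_square)
    also have "\<dots> = 2 * deg * sqrt (C / (2 * deg))"
      unfolding real_sqrt_mult real_sqrt_abs using deg_pos by simp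
    finally show ?thesis .
  qed
  have "2 * deg * \<bar>w \<one> - r\<bar> = \<bar>\<Sum>s\<in>S. dot (grad s w) (grad s (green_trunc N))\<bar>"
    using deg_pos by (simp add: sum_dot_grad_green_trunc r_def abs_mult)
  also have "\<dots> \<le> sqrt (\<Sum>s\<in>S. dot (grad s w) (grad s w))
                   * sqrt (\<Sum>s\<in>S. dot (grad s (green_trunc N)) (grad s (green_trunc N)))"
    by (intro abs_sum_le_sqrt_mult abs_dot_le fin_supp_grad fin_supp_green_trunc grad_w dot_self_nonneg)
  also have "\<dots> \<le> sqrt (\<Sum>s\<in>S. dot (grad s w) (grad s w)) * sqrt (2 * deg * C)"
    unfolding C_def
    by (intro mult_left_mono real_sqrt_le_mono dirichlet_green_trunc_le transient real_sqrt_ge_zero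
        sum_nonneg dot_self_nonneg)
  finally have "\<bar>w \<one> - r\<bar> \<le> sqrt (\<Sum>s\<in>S. dot (grad s w) (grad s w)) * sqrt (C / (2 * deg))"
    using deg_pos unfolding sqrt_C by (simp add: algebra_simps)
  moreover have "\<bar>r\<bar> \<le> sqrt (dot w w) * sqrt (walk_prob (2 * N) \<one>)"
    using abs_dot_le[OF fin_supp_walk_prob w, of N] unfolding r_def dot_walk_prob by (simp add: mult_2)
  ultimately show ?thesis unfolding C_def by linarith
qed

lemma capacity_ineq:
  assumes transient: "summable (\<lambda>n. walk_prob n \<one>)"
    and w: "(\<lambda>x. (w x)\<^sup>2) summable_on carrier H"
    and grad_w: "\<And>s. s \<in> S \<Longrightarrow> (\<lambda>x. (grad s w x)\<^sup>2) summable_on carrier H"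
  shows "\<bar>w \<one>\<bar> \<le> sqrt (\<Sum>s\<in>S. dot (grad s w) (grad s w)) * sqrt ((\<Sum>n. walk_prob n \<one>) / (2 * deg))"
    (is "_ \<le> ?a")
proof (rule LIMSEQ_le_const)
  have "(\<lambda>n. walk_prob n \<one>) \<longlonglongrightarrow> 0" by (rule summable_LIMSEQ_zero[OF transient])
  hence "(\<lambda>N. walk_prob (2 * N) \<one>) \<longlonglongrightarrow> 0"
    using LIMSEQ_subseq_LIMSEQ[of _ 0 "\<lambda>N. 2 * N"] by (simp add: strict_mono_def o_def)
  hence "(\<lambda>N. ?a + sqrt (dot w w) * sqrt (walk_prob (2 * N) \<one>)) \<longlonglongrightarrow> ?a + sqrt (dot w w) * sqrt 0"
    by (intro tendsto_intros)
  thus "(\<lambda>N. ?a + sqrt (dot w w) * sqrt (walk_prob (2 * N) \<one>)) \<longlonglongrightarrow> ?a" by simp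
  show "\<exists>N0. \<forall>N\<ge>N0. \<bar>w \<one>\<bar> \<le> ?a + sqrt (dot w w) * sqrt (walk_prob (2 * N) \<one>)"
    using capacity_ineq_trunc[OF transient w grad_w] by blast
qed

lemma infinite_carrier_if_transient:
  assumes transient: "summable (\<lambda>n. walk_prob n \<one>)"
  shows "infinite (carrier H)"
proof
  assume "finite (carrier H)"
  hence "\<bar>(\<lambda>_. 1::real) \<one>\<bar> \<le> sqrt (\<Sum>s\<in>S. dot (grad s (\<lambda>_. 1)) (grad s (\<lambda>_. 1)))
            * sqrt ((\<Sum>n. walk_prob n \<one>) / (2 * deg))"
    by (intro capacity_ineq[OF transient]) auto
  thus False by (simp add: grad_def dot_def)
qed

lemma foldr_mult_eq: "set w \<subseteq> S \<Longrightarrow> y \<in> carrier H \<Longrightarrow> foldr (\<otimes>) w y = foldr (\<otimes>) w \<one> \<otimes> y"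
  by (induction w) (use S_subset foldr_in_carrier in \<open>auto simp: m_assoc\<close>)

lemma generate_subset_words: "generate H S \<subseteq> (\<lambda>w. foldr (\<otimes>) w \<one>) ` lists S"
proof
  fix x assume "x \<in> generate H S"
  thus "x \<in> (\<lambda>w. foldr (\<otimes>) w \<one>) ` lists S"
  proof (induction rule: generate.induct)
    case one
    show ?case by (rule image_eqI[of _ _ "[]"]) auto
  next
    case (incl h)
    show ?case by (rule image_eqI[of _ _ "[h]"]) (use incl S_subset in auto)
  next
    case (inv h)
    show ?case by (rule image_eqI[of _ _ "[inv h]"]) (use inv S_subset inv_in_S in auto)
  next
    case (eng h1 h2)
    then obtain w1 w2 where w: "set w1 \<subseteq> S" "set w2 \<subseteq> S" "h1 = foldr (\<otimes>) w1 \<one>" "h2 = foldr (\<otimes>) w2 \<one>"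
      by auto
    hence "foldr (\<otimes>) (w1 @ w2) \<one> = h1 \<otimes> h2"
      using foldr_mult_eq[OF w(1) foldr_in_carrier[OF w(2)]] by simp
    thus ?case using w by (intro image_eqI[of _ _ "w1 @ w2"]) auto
  qed
qed

lemma countable_generate: "countable (generate H S)"
  using generate_subset_words
  by (rule countable_subset) (intro countable_image countable_lists countable_finite finite_S)

end

lemma sum_fun_apply: "(\<Sum>w\<in>A. f w) i = (\<Sum>w\<in>A. f w i)"
  for f :: "'x \<Rightarrow> 'y \<Rightarrow> 'z::comm_monoid_add"
  by (induction A rule: infinite_finite_induct) auto

definition unit_vec :: "nat \<Rightarrow> nat \<Rightarrow> complex" where
  "unit_vec m = (\<lambda>i. if i = m then 1 else 0)"

lemma finite_unit_vecs_in_span: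
  fixes B :: "(nat \<Rightarrow> complex) set"
  assumes B: "finite B"
  shows "finite {m. \<exists>c. unit_vec m = (\<lambda>i. \<Sum>w\<in>B. c w * w i)}"
proof (rule ccontr)
  interpret CV: vector_space "\<lambda>c (u :: nat \<Rightarrow> complex) i. c * u i"
    by unfold_locales (auto simp: fun_eq_iff algebra_simps)
  assume "infinite {m. \<exists>c. unit_vec m = (\<lambda>i. \<Sum>w\<in>B. c w * w i)}"
  then obtain M where M: "M \<subseteq> {m. \<exists>c. unit_vec m = (\<lambda>i. \<Sum>w\<in>B. c w * w i)}" "finite M"
    "card M = Suc (card B)"
    using infinite_arbitrarily_large by blast
  have inj: "inj_on unit_vec M" unfolding unit_vec_def inj_on_def by (metis one_neq_zero)
  have span: "unit_vec ` M \<subseteq> CV.span B"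
  proof
    fix x assume "x \<in> unit_vec ` M"
    then obtain m c where m: "x = unit_vec m" "unit_vec m = (\<lambda>i. \<Sum>w\<in>B. c w * w i)" using M by auto
    have "unit_vec m = (\<Sum>w\<in>B. (\<lambda>i. c w * w i))"
      unfolding m by (rule ext) (simp add: sum_fun_apply)
    thus "x \<in> CV.span B" unfolding m CV.span_finite[OF B] by auto
  qed
  have "CV.independent (unit_vec ` M)"
  proof
    assume "CV.dependent (unit_vec ` M)"
    then obtain u where u: "\<exists>v\<in>unit_vec ` M. u v \<noteq> 0" "(\<Sum>v\<in>unit_vec ` M. (\<lambda>i. u v * v i)) = 0"
      using CV.dependent_finite[of "unit_vec ` M"] M by auto
    then obtain m where m: "m \<in> M" "u (unit_vec m) \<noteq> 0" by auto
    have "0 = (\<Sum>v\<in>unit_vec ` M. (\<lambda>i. u v * v i)) m" using u(2) by simp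
    also have "\<dots> = (\<Sum>m'\<in>M. u (unit_vec m') * unit_vec m' m)"
      using M inj by (simp add: sum_fun_apply sum.reindex)
    also have "\<dots> = (\<Sum>m'\<in>M. if m' = m then u (unit_vec m) else 0)"
      by (rule sum.cong) (auto simp: unit_vec_def)
    also have "\<dots> = u (unit_vec m)" using m M by simp
    finally show False using m by simp
  qed
  hence "card (unit_vec ` M) \<le> card B" using CV.independent_span_bound[OF B _ span] by simp
  thus False using M inj card_image by fastforce
qed

lemma l2_vanishes: "u \<in> l2 I \<Longrightarrow> i \<notin> I \<Longrightarrow> u i = 0"
  unfolding l2_def by auto

lemma l2_finite_support:
  assumes fin: "finite {i. u i \<noteq> 0}" and vanish: "\<And>i. i \<notin> I \<Longrightarrow> u i = 0"
  shows "u \<in> l2 I"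
proof -
  have "(\<lambda>i. (cmod (u i))\<^sup>2) summable_on {i. u i \<noteq> 0}" using fin by simp
  hence "(\<lambda>i. (cmod (u i))\<^sup>2) summable_on I"
    by (subst summable_on_cong_neutral[where T="{i. u i \<noteq> 0}" and g="\<lambda>i. (cmod (u i))\<^sup>2"])
       (use vanish in auto)
  thus ?thesis using vanish by (simp add: l2_def)
qed

lemma l2_lincomb:
  assumes u: "u \<in> l2 I" and v: "v \<in> l2 I"
  shows "(\<lambda>i. a * u i + c * v i) \<in> l2 I"
proof -
  have "(\<lambda>i. 2 * (cmod a)\<^sup>2 * (cmod (u i))\<^sup>2 + 2 * (cmod c)\<^sup>2 * (cmod (v i))\<^sup>2) summable_on I"
    using u v by (intro summable_on_add summable_on_cmult_right) (auto simp: l2_def)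
  moreover have "(cmod (a * u i + c * v i))\<^sup>2 \<le> 2 * (cmod a)\<^sup>2 * (cmod (u i))\<^sup>2 + 2 * (cmod c)\<^sup>2 * (cmod (v i))\<^sup>2" for i
  proof -
    have "cmod (a * u i + c * v i) \<le> cmod a * cmod (u i) + cmod c * cmod (v i)"
      by (metis norm_mult norm_triangle_ineq)
    hence "(cmod (a * u i + c * v i))\<^sup>2 \<le> (cmod a * cmod (u i) + cmod c * cmod (v i))\<^sup>2"
      by (intro power_mono) auto
    also have "\<dots> \<le> 2 * (cmod a * cmod (u i))\<^sup>2 + 2 * (cmod c * cmod (v i))\<^sup>2"
      using sum_squares_bound[of "cmod a * cmod (u i)" "cmod c * cmod (v i)"] by (simp add: power2_sum)
    finally show ?thesis by (simp add: power_mult_distrib)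
  qed
  ultimately have "(\<lambda>i. (cmod (a * u i + c * v i))\<^sup>2) summable_on I"
    by (rule summable_on_comparison_test) auto
  thus ?thesis using u v by (auto simp: l2_def)
qed

lemma l2norm_nonneg: "l2norm I u \<ge> 0"
  unfolding l2norm_def by (simp add: infsum_nonneg)

lemma norm_le_l2norm:
  assumes u: "u \<in> l2 I" and n: "n \<in> I"
  shows "cmod (u n) \<le> l2norm I u"
proof -
  have "infsum (\<lambda>i. (cmod (u i))\<^sup>2) {n} \<le> infsum (\<lambda>i. (cmod (u i))\<^sup>2) I"
    by (rule infsum_mono_neutral) (use u n in \<open>auto simp: l2_def\<close>)
  thus ?thesis unfolding l2norm_def by (simp add: real_le_rsqrt)
qed

section \<open>The sign-twisted regular representation of the lamplighter group\<close>

lemma lamplighter_carrier: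
  "carrier (lamplighter H) = {(f, h). finite {x. f x} \<and> {x. f x} \<subseteq> carrier H \<and> h \<in> carrier H}"
  and lamplighter_mult: "(f, h) \<otimes>\<^bsub>lamplighter H\<^esub> (f', h') =
     ((\<lambda>x. if x \<in> carrier H then f x \<noteq> f' (inv\<^bsub>H\<^esub> h \<otimes>\<^bsub>H\<^esub> x) else False), h \<otimes>\<^bsub>H\<^esub> h')"
  and lamplighter_one: "\<one>\<^bsub>lamplighter H\<^esub> = ((\<lambda>_. False), \<one>\<^bsub>H\<^esub>)"
  by (simp_all add: lamplighter_def)

locale lamplighter_rep = group H for H :: "('a, 'b) monoid_scheme" (structure) +
  assumes countable_carrier: "countable (carrier H)"
begin

definition enc :: "'a \<Rightarrow> nat" where "enc = to_nat_on (carrier H)"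
definition dec :: "nat \<Rightarrow> 'a" where "dec = from_nat_into (carrier H)"
definition I :: "nat set" where "I = enc ` carrier H"

definition lamp_sign :: "bool \<Rightarrow> complex" where "lamp_sign b = (if b then -1 else 1)"

text \<open>The space l2 I stands for l^2(H), transported along the injection enc.\<close>
definition lamp_rep :: "('a \<Rightarrow> bool) \<times> 'a \<Rightarrow> (nat \<Rightarrow> complex) \<Rightarrow> nat \<Rightarrow> complex" where
  "lamp_rep g u = (\<lambda>n. if n \<in> I then lamp_sign (fst g (dec n)) * u (enc (inv (snd g) \<otimes> dec n)) else 0)"

definition lamp_cocycle :: "('a \<Rightarrow> bool) \<times> 'a \<Rightarrow> nat \<Rightarrow> complex" where
  "lamp_cocycle g = (\<lambda>n. if n \<in> I \<and> fst g (dec n) then -2 else 0)"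

lemma enc_inj: "inj_on enc (carrier H)"
  unfolding enc_def using countable_carrier by (rule inj_on_to_nat_on)

lemma enc_in_I [simp]: "x \<in> carrier H \<Longrightarrow> enc x \<in> I"
  by (simp add: I_def)

lemma dec_enc [simp]: "x \<in> carrier H \<Longrightarrow> dec (enc x) = x"
  unfolding enc_def dec_def using countable_carrier by simp

lemma enc_eq_iff: "x \<in> carrier H \<Longrightarrow> y \<in> carrier H \<Longrightarrow> enc x = enc y \<longleftrightarrow> x = y"
  using enc_inj by (auto dest: inj_onD)

lemma I_cases:
  assumes "n \<in> I"
  obtains x where "x \<in> carrier H" "n = enc x"
  using assms unfolding I_def by auto

lemma l2_iff_summable_on_carrier:
  assumes "\<And>i. i \<notin> I \<Longrightarrow> u i = 0"
  shows "u \<in> l2 I \<longleftrightarrow> (\<lambda>x. (cmod (u (enc x)))\<^sup>2) summable_on carrier H"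
  using assms summable_on_reindex[OF enc_inj, of "\<lambda>i. (cmod (u i))\<^sup>2"]
  unfolding l2_def I_def by (simp add: o_def)

lemma l2norm_eq_infsum_carrier: "l2norm I u = sqrt (infsum (\<lambda>x. (cmod (u (enc x)))\<^sup>2) (carrier H))"
  using infsum_reindex[OF enc_inj, of "\<lambda>i. (cmod (u i))\<^sup>2"]
  unfolding l2norm_def I_def by (simp add: o_def)

lemma summable_on_carrier_if_l2: "u \<in> l2 I \<Longrightarrow> (\<lambda>x. (cmod (u (enc x)))\<^sup>2) summable_on carrier H"
  using l2_iff_summable_on_carrier l2_vanishes by blast

lemma lamp_rep_enc [simp]: "x \<in> carrier H \<Longrightarrow> lamp_rep (f, h) u (enc x) = lamp_sign (f x) * u (enc (inv h \<otimes> x))"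
  by (simp add: lamp_rep_def)

lemma lamp_rep_outside: "n \<notin> I \<Longrightarrow> lamp_rep g u n = 0"
  by (simp add: lamp_rep_def)

lemma cmod_lamp_sign [simp]: "cmod (lamp_sign b) = 1"
  by (simp add: lamp_sign_def)

lemma lamp_rep_in_l2:
  assumes h: "h \<in> carrier H" and u: "u \<in> l2 I"
  shows "lamp_rep (f, h) u \<in> l2 I"
proof -
  have "(\<lambda>x. (cmod (u (enc (inv h \<otimes> x))))\<^sup>2) summable_on carrier H"
    using summable_on_translate[of "inv h" "\<lambda>x. (cmod (u (enc x)))\<^sup>2"] summable_on_carrier_if_l2[OF u] h
    by simp
  hence "(\<lambda>x. (cmod (lamp_rep (f, h) u (enc x)))\<^sup>2) summable_on carrier H"
    by (rule summable_on_cong[THEN iffD1, rotated]) (simp add: norm_mult)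
  thus ?thesis by (subst l2_iff_summable_on_carrier) (auto simp: lamp_rep_outside)
qed

lemma lamp_rep_l2norm:
  assumes h: "h \<in> carrier H"
  shows "l2norm I (lamp_rep (f, h) u) = l2norm I u"
proof -
  have "infsum (\<lambda>x. (cmod (lamp_rep (f, h) u (enc x)))\<^sup>2) (carrier H)
      = infsum (\<lambda>x. (cmod (u (enc (inv h \<otimes> x))))\<^sup>2) (carrier H)"
    by (rule infsum_cong) (simp add: norm_mult)
  also have "\<dots> = infsum (\<lambda>x. (cmod (u (enc x)))\<^sup>2) (carrier H)"
    using infsum_translate[of "inv h" "\<lambda>x. (cmod (u (enc x)))\<^sup>2"] h by simp
  finally show ?thesis unfolding l2norm_eq_infsum_carrier by simp
qed

lemma lamp_rep_mult:
  assumes h: "h \<in> carrier H" and h': "h' \<in> carrier H"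
  shows "lamp_rep ((f, h) \<otimes>\<^bsub>lamplighter H\<^esub> (f', h')) u = lamp_rep (f, h) (lamp_rep (f', h') u)"
proof
  fix n
  show "lamp_rep ((f, h) \<otimes>\<^bsub>lamplighter H\<^esub> (f', h')) u n = lamp_rep (f, h) (lamp_rep (f', h') u) n"
  proof (cases "n \<in> I")
    case True
    then obtain y where y: "y \<in> carrier H" "n = enc y" by (rule I_cases)
    have "inv (h \<otimes> h') \<otimes> y = inv h' \<otimes> (inv h \<otimes> y)"
      using h h' y by (simp add: inv_mult_group m_assoc)
    thus ?thesis using y h h' by (simp add: lamplighter_mult lamp_sign_def)
  qed (simp add: lamp_rep_outside)
qed

lemma lamp_rep_one: "u \<in> l2 I \<Longrightarrow> lamp_rep \<one>\<^bsub>lamplighter H\<^esub> u = u"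
  by (rule ext) (auto simp: lamplighter_one lamp_rep_def lamp_sign_def I_def l2_vanishes)

lemma lamp_rep_surj:
  assumes h: "h \<in> carrier H" and u: "u \<in> l2 I"
  shows "u \<in> lamp_rep (f, h) ` l2 I"
proof
  have "lamp_rep (f, h) (lamp_rep (\<lambda>y. f (h \<otimes> y), inv h) u) n = u n" for n
  proof (cases "n \<in> I")
    case True
    then obtain y where y: "y \<in> carrier H" "n = enc y" by (rule I_cases)
    thus ?thesis using h by (simp add: m_assoc[symmetric] lamp_sign_def)
  qed (simp add: lamp_rep_outside l2_vanishes[OF u])
  thus "u = lamp_rep (f, h) (lamp_rep (\<lambda>y. f (h \<otimes> y), inv h) u)" by auto
  show "lamp_rep (\<lambda>y. f (h \<otimes> y), inv h) u \<in> l2 I" using lamp_rep_in_l2[OF _ u] h by simp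
qed

lemma unitary_rep_lamp_rep: "unitary_rep (lamplighter H) I lamp_rep"
  unfolding unitary_rep_def
proof (intro conjI ballI allI)
  fix g assume "g \<in> carrier (lamplighter H)"
  then obtain f h where g: "g = (f, h)" and h: "h \<in> carrier H" by (auto simp: lamplighter_carrier)
  show "lamp_rep g ` l2 I = l2 I"
    unfolding g using lamp_rep_in_l2[OF h] lamp_rep_surj[OF h] by blast
  show "lamp_rep g (\<lambda>i. a * u i + b * v i) = (\<lambda>i. a * lamp_rep g u i + b * lamp_rep g v i)" for u v a b
    by (simp add: lamp_rep_def fun_eq_iff algebra_simps)
  show "l2norm I (lamp_rep g u) = l2norm I u" for u
    unfolding g by (rule lamp_rep_l2norm[OF h])
next
  fix g g' u assume "g \<in> carrier (lamplighter H)" "g' \<in> carrier (lamplighter H)"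
  thus "lamp_rep (g \<otimes>\<^bsub>lamplighter H\<^esub> g') u = lamp_rep g (lamp_rep g' u)"
    by (auto simp: lamplighter_carrier lamp_rep_mult)
qed (rule lamp_rep_one)

lemma cocycle_lamp_cocycle: "cocycle (lamplighter H) I lamp_rep lamp_cocycle"
  unfolding cocycle_def
proof (intro conjI ballI)
  fix g assume "g \<in> carrier (lamplighter H)"
  then obtain f h where g: "g = (f, h)" and f: "finite {x. f x}" by (auto simp: lamplighter_carrier)
  have "finite {i. lamp_cocycle g i \<noteq> 0}"
    by (rule finite_subset[OF _ finite_imageI[OF f]]) (auto simp: lamp_cocycle_def g elim!: I_cases)
  thus "lamp_cocycle g \<in> l2 I"
    by (rule l2_finite_support) (simp add: lamp_cocycle_def)
next
  fix g g' assume "g \<in> carrier (lamplighter H)" "g' \<in> carrier (lamplighter H)"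
  then obtain f h f' h' where g: "g = (f, h)" "h \<in> carrier H" and g': "g' = (f', h')" "h' \<in> carrier H"
    by (auto simp: lamplighter_carrier)
  show "lamp_cocycle (g \<otimes>\<^bsub>lamplighter H\<^esub> g') = (\<lambda>i. lamp_cocycle g i + lamp_rep g (lamp_cocycle g') i)"
  proof
    fix n
    show "lamp_cocycle (g \<otimes>\<^bsub>lamplighter H\<^esub> g') n = lamp_cocycle g n + lamp_rep g (lamp_cocycle g') n"
    proof (cases "n \<in> I")
      case True
      then obtain y where y: "y \<in> carrier H" "n = enc y" by (rule I_cases)
      have "inv h \<otimes> y \<in> carrier H" using g y by simp
      thus ?thesis using y g g' by (simp add: lamplighter_mult lamp_cocycle_def lamp_sign_def)
    qed (simp add: lamp_rep_outside lamp_cocycle_def)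
  qed
qed

lemma lamp_rep_translate_unit_vec:
  assumes h: "h \<in> carrier H" and y: "y \<in> carrier H"
  shows "lamp_rep (\<lambda>_. False, h) (unit_vec (enc y)) = unit_vec (enc (h \<otimes> y))"
proof
  fix n
  show "lamp_rep (\<lambda>_. False, h) (unit_vec (enc y)) n = unit_vec (enc (h \<otimes> y)) n"
  proof (cases "n \<in> I")
    case True
    then obtain x where x: "x \<in> carrier H" "n = enc x" by (rule I_cases)
    have "enc (inv h \<otimes> x) = enc y \<longleftrightarrow> enc x = enc (h \<otimes> y)"
      using x h y inv_solve_left[of y h x] by (simp add: enc_eq_iff eq_commute[of y])
    thus ?thesis using x h by (simp add: unit_vec_def lamp_sign_def)
  next
    case False
    thus ?thesis using h y enc_in_I[of "h \<otimes> y"] by (auto simp: lamp_rep_outside unit_vec_def)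
  qed
qed

lemma lamp_rep_switch:
  assumes y: "y \<in> carrier H" and u: "u \<in> l2 I"
  shows "lamp_rep ((\<lambda>x. x = y), \<one>) u = (\<lambda>n. if n = enc y then - u n else u n)"
proof
  fix n
  show "lamp_rep ((\<lambda>x. x = y), \<one>) u n = (if n = enc y then - u n else u n)"
  proof (cases "n \<in> I")
    case True
    then obtain x where "x \<in> carrier H" "n = enc x" by (rule I_cases)
    thus ?thesis using y by (auto simp: lamp_sign_def enc_eq_iff)
  qed (use y l2_vanishes[OF u] in \<open>auto simp: lamp_rep_outside\<close>)
qed

lemma invariant_subspace_contains_unit_vecs:
  assumes V: "V \<subseteq> l2 I"
    and lin: "\<And>u v a b. u \<in> V \<Longrightarrow> v \<in> V \<Longrightarrow> (\<lambda>i. a * u i + b * v i) \<in> V"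
    and invariant: "\<And>g u. g \<in> carrier (lamplighter H) \<Longrightarrow> u \<in> V \<Longrightarrow> lamp_rep g u \<in> V"
    and u: "u \<in> V" "u n \<noteq> 0" and z: "z \<in> carrier H"
  shows "unit_vec (enc z) \<in> V"
proof -
  have ul2: "u \<in> l2 I" using u(1) V by auto
  have "n \<in> I" using l2_vanishes[OF ul2] u(2) by blast
  then obtain y where y: "y \<in> carrier H" "n = enc y" by (rule I_cases)
  have "(\<lambda>i. (1 / (2 * u n)) * u i + (- 1 / (2 * u n)) * lamp_rep ((\<lambda>x. x = y), \<one>) u i) \<in> V"
    using y by (intro lin u(1) invariant) (auto simp: lamplighter_carrier)
  also have "(\<lambda>i. (1 / (2 * u n)) * u i + (- 1 / (2 * u n)) * lamp_rep ((\<lambda>x. x = y), \<one>) u i) = unit_vec n"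
    using u(2) y(2) by (auto simp: lamp_rep_switch[OF y(1) ul2] unit_vec_def field_simps)
  finally have "lamp_rep (\<lambda>_. False, z \<otimes> inv y) (unit_vec (enc y)) \<in> V"
    using y z by (intro invariant) (auto simp: lamplighter_carrier)
  thus ?thesis using y z by (simp add: lamp_rep_translate_unit_vec m_assoc)
qed

lemma no_fd_subrep_lamp_rep:
  assumes infinite: "infinite (carrier H)"
  shows "\<not> has_nonzero_fd_subrep (lamplighter H) I lamp_rep"
proof
  assume "has_nonzero_fd_subrep (lamplighter H) I lamp_rep"
  then obtain V B u where V: "V \<subseteq> l2 I"
    and lin: "\<forall>u\<in>V. \<forall>v\<in>V. \<forall>a b::complex. (\<lambda>i. a * u i + b * v i) \<in> V"
    and B: "finite B" and span: "\<forall>u\<in>V. \<exists>c. u = (\<lambda>i. \<Sum>w\<in>B. c w * w i)"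
    and u: "u \<in> V" "u \<noteq> (\<lambda>_. 0)"
    and invariant: "\<forall>g\<in>carrier (lamplighter H). \<forall>u\<in>V. lamp_rep g u \<in> V"
    unfolding has_nonzero_fd_subrep_def by blast
  obtain n where "u n \<noteq> 0" using u(2) by auto
  hence "unit_vec (enc z) \<in> V" if "z \<in> carrier H" for z
    using invariant_subspace_contains_unit_vecs[OF V _ _ u(1) _ that] lin invariant by blast
  hence "enc ` carrier H \<subseteq> {m. \<exists>c. unit_vec m = (\<lambda>i. \<Sum>w\<in>B. c w * w i)}"
    using span by blast
  moreover have "infinite (enc ` carrier H)"
    using infinite enc_inj finite_image_iff by blast
  ultimately show False
    using finite_unit_vecs_in_span[OF B] finite_subset by blast
qed

lemma coboundary_defect_in_l2:
  assumes g: "g \<in> carrier (lamplighter H)" and v: "v \<in> l2 I"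
  shows "(\<lambda>i. lamp_cocycle g i - (lamp_rep g v i - v i)) \<in> l2 I"
proof -
  obtain f h where gfh: "g = (f, h)" and h: "h \<in> carrier H" using g by (auto simp: lamplighter_carrier)
  have b: "lamp_cocycle g \<in> l2 I"
    using cocycle_lamp_cocycle g by (simp add: cocycle_def)
  have "(\<lambda>i. 1 * lamp_rep g v i + (-1) * v i) \<in> l2 I"
    unfolding gfh by (intro l2_lincomb lamp_rep_in_l2 h v)
  from l2_lincomb[OF b this, of 1 "-1"] show ?thesis by (simp add: algebra_simps)
qed

lemma coboundary_defect_switch_one:
  assumes v: "v \<in> l2 I"
  shows "2 * cmod (v (enc \<one>) - 1)
    \<le> l2norm I (\<lambda>i. lamp_cocycle ((\<lambda>x. x = \<one>), \<one>) i - (lamp_rep ((\<lambda>x. x = \<one>), \<one>) v i - v i))"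
proof -
  have g: "((\<lambda>x. x = \<one>), \<one>) \<in> carrier (lamplighter H)"
    by (simp add: lamplighter_carrier)
  have eq: "lamp_cocycle ((\<lambda>x. x = \<one>), \<one>) (enc \<one>) - (lamp_rep ((\<lambda>x. x = \<one>), \<one>) v (enc \<one>) - v (enc \<one>))
      = 2 * (v (enc \<one>) - 1)"
    by (simp add: lamp_cocycle_def lamp_sign_def)
  have "2 * cmod (v (enc \<one>) - 1) = cmod (2 * (v (enc \<one>) - 1))"
    by (simp only: norm_mult) simp
  also have "\<dots> = cmod (lamp_cocycle ((\<lambda>x. x = \<one>), \<one>) (enc \<one>) - (lamp_rep ((\<lambda>x. x = \<one>), \<one>) v (enc \<one>) - v (enc \<one>)))"
    by (simp only: eq)
  also have "\<dots> \<le> l2norm I (\<lambda>i. lamp_cocycle ((\<lambda>x. x = \<one>), \<one>) i - (lamp_rep ((\<lambda>x. x = \<one>), \<one>) v i - v i))"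
    by (rule norm_le_l2norm[OF coboundary_defect_in_l2[OF g v]]) simp
  finally show ?thesis .
qed

lemma summable_Re_sq: "v \<in> l2 I \<Longrightarrow> (\<lambda>x. (Re (v (enc x)))\<^sup>2) summable_on carrier H"
  by (rule summable_on_comparison_test[OF summable_on_carrier_if_l2]) (auto simp: cmod_power2)

lemma coboundary_defect_translate:
  assumes h: "h \<in> carrier H" and v: "v \<in> l2 I"
  shows "(\<lambda>x. (Re (v (enc (inv h \<otimes> x))) - Re (v (enc x)))\<^sup>2) summable_on carrier H"
    and "infsum (\<lambda>x. (Re (v (enc (inv h \<otimes> x))) - Re (v (enc x)))\<^sup>2) (carrier H)
      \<le> (l2norm I (\<lambda>i. lamp_cocycle (\<lambda>_. False, h) i - (lamp_rep (\<lambda>_. False, h) v i - v i)))\<^sup>2"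
proof -
  define D where "D = (\<lambda>i. lamp_cocycle (\<lambda>_. False, h) i - (lamp_rep (\<lambda>_. False, h) v i - v i))"
  have D: "(\<lambda>x. (cmod (D (enc x)))\<^sup>2) summable_on carrier H"
    unfolding D_def using h
    by (intro summable_on_carrier_if_l2 coboundary_defect_in_l2 v) (auto simp: lamplighter_carrier)
  have le: "(Re (v (enc (inv h \<otimes> x))) - Re (v (enc x)))\<^sup>2 \<le> (cmod (D (enc x)))\<^sup>2" if "x \<in> carrier H" for x
  proof -
    have "D (enc x) = - (v (enc (inv h \<otimes> x)) - v (enc x))"
      using that by (simp add: D_def lamp_cocycle_def lamp_sign_def)
    thus ?thesis by (simp add: cmod_power2 power2_commute[of "Re (v (enc x))"])
  qed
  show summ: "(\<lambda>x. (Re (v (enc (inv h \<otimes> x))) - Re (v (enc x)))\<^sup>2) summable_on carrier H"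
    by (rule summable_on_comparison_test[OF D]) (use le in auto)
  have "infsum (\<lambda>x. (Re (v (enc (inv h \<otimes> x))) - Re (v (enc x)))\<^sup>2) (carrier H)
      \<le> infsum (\<lambda>x. (cmod (D (enc x)))\<^sup>2) (carrier H)"
    by (rule infsum_mono[OF summ D le])
  also have "\<dots> = (l2norm I D)\<^sup>2"
    unfolding l2norm_eq_infsum_carrier by (simp add: infsum_nonneg)
  finally show "infsum (\<lambda>x. (Re (v (enc (inv h \<otimes> x))) - Re (v (enc x)))\<^sup>2) (carrier H) \<le> (l2norm I D)\<^sup>2" .
qed

end

section \<open>Nonvanishing reduced cohomology for transient H\<close>

locale transient_lamplighter = symmetric_random_walk H S + lamplighter_rep H
  for H :: "('a, 'b) monoid_scheme" (structure) and S +
  assumes transient: "summable (\<lambda>n. walk_prob n \<one>)"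
begin

lemma dirichlet_Re_le_defect:
  assumes v: "v \<in> l2 I" and s: "s \<in> S"
  shows "(\<lambda>x. (grad s (\<lambda>x. Re (v (enc x))) x)\<^sup>2) summable_on carrier H"
    and "dot (grad s (\<lambda>x. Re (v (enc x)))) (grad s (\<lambda>x. Re (v (enc x))))
      \<le> (l2norm I (\<lambda>i. lamp_cocycle (\<lambda>_. False, s) i - (lamp_rep (\<lambda>_. False, s) v i - v i)))\<^sup>2"
proof -
  have sc: "s \<in> carrier H" using s S_subset by auto
  show "(\<lambda>x. (grad s (\<lambda>x. Re (v (enc x))) x)\<^sup>2) summable_on carrier H"
    using coboundary_defect_translate(1)[OF sc v] by (simp add: grad_def)
  show "dot (grad s (\<lambda>x. Re (v (enc x)))) (grad s (\<lambda>x. Re (v (enc x))))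
      \<le> (l2norm I (\<lambda>i. lamp_cocycle (\<lambda>_. False, s) i - (lamp_rep (\<lambda>_. False, s) v i - v i)))\<^sup>2"
    using coboundary_defect_translate(2)[OF sc v] by (simp add: dot_def grad_def power2_eq_square)
qed

lemma Re_at_one_le_defect:
  assumes v: "v \<in> l2 I"
    and defect: "\<And>s. s \<in> S \<Longrightarrow>
      l2norm I (\<lambda>i. lamp_cocycle (\<lambda>_. False, s) i - (lamp_rep (\<lambda>_. False, s) v i - v i)) \<le> \<delta>"
  shows "\<bar>Re (v (enc \<one>))\<bar> \<le> \<delta> * sqrt deg * sqrt ((\<Sum>n. walk_prob n \<one>) / (2 * deg))"
proof -
  let ?w = "\<lambda>x. Re (v (enc x))"
  have green: "(\<Sum>n. walk_prob n \<one>) \<ge> 0"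
    by (rule suminf_nonneg[OF transient walk_prob_nonneg])
  obtain s0 where "s0 \<in> S" using S_nonempty by blast
  hence \<delta>: "\<delta> \<ge> 0" using defect l2norm_nonneg order_trans by blast
  have dirichlet: "dot (grad s ?w) (grad s ?w) \<le> \<delta>\<^sup>2" if "s \<in> S" for s
    using dirichlet_Re_le_defect(2)[OF v that] power_mono[OF defect[OF that] l2norm_nonneg, of 2] by linarith
  have "\<bar>?w \<one>\<bar> \<le> sqrt (\<Sum>s\<in>S. dot (grad s ?w) (grad s ?w)) * sqrt ((\<Sum>n. walk_prob n \<one>) / (2 * deg))"
    by (intro capacity_ineq transient summable_Re_sq v dirichlet_Re_le_defect(1))
  also have "\<dots> \<le> sqrt (deg * \<delta>\<^sup>2) * sqrt ((\<Sum>n. walk_prob n \<one>) / (2 * deg))"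
    using dirichlet sum_mono[of S "\<lambda>s. dot (grad s ?w) (grad s ?w)" "\<lambda>_. \<delta>\<^sup>2"] green deg_pos
    by (intro mult_right_mono real_sqrt_le_mono) (auto simp: deg_def)
  also have "\<dots> = \<delta> * sqrt deg * sqrt ((\<Sum>n. walk_prob n \<one>) / (2 * deg))"
    using \<delta> deg_pos by (simp add: real_sqrt_mult)
  finally show ?thesis .
qed

lemma lamp_cocycle_not_in_closure: "\<not> in_closure_coboundaries (lamplighter H) I lamp_rep lamp_cocycle"
proof
  assume closure: "in_closure_coboundaries (lamplighter H) I lamp_rep lamp_cocycle"
  define K where "K = sqrt deg * sqrt ((\<Sum>n. walk_prob n \<one>) / (2 * deg))"
  define \<epsilon> where "\<epsilon> = 1 / (1 + K)"
  have K: "K \<ge> 0"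
    unfolding K_def using deg_pos suminf_nonneg[OF transient walk_prob_nonneg] by simp
  hence \<epsilon>: "\<epsilon> > 0" "\<epsilon> * (1 + K) = 1" by (auto simp: \<epsilon>_def)
  define switch_one where "switch_one = ((\<lambda>x. x = \<one>), \<one>)"
  define F where "F = insert switch_one ((\<lambda>s. ((\<lambda>_. False), s)) ` S)"
  have "finite F \<and> F \<subseteq> carrier (lamplighter H)"
    using finite_S S_subset by (auto simp: F_def switch_one_def lamplighter_carrier)
  hence "\<exists>v\<in>l2 I. \<forall>g\<in>F. l2norm I (\<lambda>i. lamp_cocycle g i - (lamp_rep g v i - v i)) < \<epsilon>"
    using closure \<epsilon>(1) unfolding in_closure_coboundaries_def by simp
  then obtain v where v: "v \<in> l2 I"
    and close: "\<And>g. g \<in> F \<Longrightarrow> l2norm I (\<lambda>i. lamp_cocycle g i - (lamp_rep g v i - v i)) < \<epsilon>"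
    by blast
  have "2 * \<bar>Re (v (enc \<one>)) - 1\<bar> \<le> 2 * cmod (v (enc \<one>) - 1)"
    using abs_Re_le_cmod[of "v (enc \<one>) - 1"] by simp
  also have "\<dots> < \<epsilon>"
    using coboundary_defect_switch_one[OF v] close[of switch_one] by (simp add: F_def switch_one_def)
  finally have "1 - \<epsilon> / 2 < Re (v (enc \<one>))" by (simp add: abs_if split: if_splits)
  moreover have "\<bar>Re (v (enc \<one>))\<bar> \<le> \<epsilon> * K"
    unfolding K_def mult.assoc[symmetric]
    by (rule Re_at_one_le_defect[OF v]) (use close in \<open>auto simp: F_def less_imp_le\<close>)
  ultimately show False using \<epsilon> K by (simp add: algebra_simps)
qed

end

theorem proposition4p1:
  fixes H :: "('a, 'b) monoid_scheme"
  assumes "group H"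
    and "finitely_generated H"
    and "srw_transient H"
  shows "\<not> has_HFD (lamplighter H)"
proof -
  obtain S where S: "finite S" "S \<noteq> {}" "S \<subseteq> carrier H" "\<forall>s\<in>S. inv\<^bsub>H\<^esub> s \<in> S"
    "generate H S = carrier H" "summable (return_prob H S)"
    using assms(3) unfolding srw_transient_def by blast
  interpret symmetric_random_walk H S
    by (intro symmetric_random_walk.intro symmetric_random_walk_axioms.intro assms(1)) (use S in auto)
  interpret transient_lamplighter H S
    by unfold_locales (use countable_generate S walk_prob_one in auto)
  show ?thesis
    unfolding has_HFD_def nonzero_reduced_H1_def
    using unitary_rep_lamp_rep cocycle_lamp_cocycle lamp_cocycle_not_in_closure
      no_fd_subrep_lamp_rep[OF infinite_carrier_if_transient[OF transient]]
    by blast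
qed

end
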